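(* For every $m\in\mathbb{N}$ we have $$N(2,3,3;2m)=N(1,3,3;m),\qquad t(2,3,3;8m+6)=2t(1,3,3;m),\qquad t(2,3,3;32m+27)=4t(1,3,3;m).$$ Moreover, for every $n\in\mathbb{Z}^+$ with $n\not\equiv 15\pmod{16}$ we have $$t(2,3,3;n)=\begin{cases} 4N(1,3,3;n+1)&\text{if } n\equiv 0,1\pmod 4,\\ 2N(1,3,3;n+1)&\text{if } n\equiv 2\pmod 8,\\ N(1,3,3;n+1)&\text{if } n\equiv 6\pmod 8 \text{ or } n\equiv 27\pmod{32},\\ \frac 85N(1,3,3;n+1)&\text{if } n\equiv 3,7\pmod{16},\\ \frac 43N(1,3,3;n+1)&\text{if } n\equiv 11\pmod{32}.\end{cases}$$
   Context: $\mathbb{Z}^+$ is the set of positive integers and $\mathbb{N}$ the set of nonnegative integers. For $a,b,c\in\mathbb{Z}^+$ and $n\in\mathbb{N}$, $N(a,b,c;n)$ denotes the number of triples $(x,y,z)\in\mathbb{Z}^3$ with $n=ax^2+by^2+cz^2$, and $t(a,b,c;n)$ denotes the number of triples $(x,y,z)\in\mathbb{Z}^3$ with $n=a\frac{x(x+1)}2+b\frac{y(y+1)}2+c\frac{z(z+1)}2$. *)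

theory Defs
  imports Complex_Main
begin

definition Nrep :: "nat \<Rightarrow> nat \<Rightarrow> nat \<Rightarrow> nat \<Rightarrow> nat" where
  "Nrep a b c n = card {(x::int, y::int, z::int).
      int n = int a * x^2 + int b * y^2 + int c * z^2}"

definition trep :: "nat \<Rightarrow> nat \<Rightarrow> nat \<Rightarrow> nat \<Rightarrow> nat" where
  "trep a b c n = card {(x::int, y::int, z::int).
      int n = int a * (x * (x + 1) div 2) + int b * (y * (y + 1) div 2)
              + int c * (z * (z + 1) div 2)}"

end

theory Submission
  imports Defs
begin

(* Write N(K) for the number of representations K = x^2 + 3y^2 + 3z^2 and M(K) for those with
   x + y odd.  Completing squares, t(1,3,3;m) counts the representations of 8m + 7 by odd x, y, z,
   and after the substitution (y, z) = (u + v, u - v) both t(2,3,3;n) and N(2,3,3;2m) become counts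
   for x^2 + 3u^2 + 3v^2; in particular t(2,3,3;n) = 4 M(n + 1).
   The key tool is the reflection (x, y) |-> ((x + 3y)/2, (x - y)/2): it preserves x^2 + 3y^2 and
   is an involution exchanging pairs of odd numbers with x \<equiv> y (mod 4) and pairs of even numbers
   with odd half-sum.  Combined with the residues of squares modulo 4 and 8 it gives
   N(4K) = N(K) + 4M(K), M(4K) = 2M(K), and N(K) = M(K), 2M(K), 4M(K) according as
   K \<equiv> 1, 2 (mod 4), K \<equiv> 3 (mod 8), K \<equiv> 7 (mod 8); every case of the theorem follows. *)

definition count133 :: "(int \<Rightarrow> int \<Rightarrow> int \<Rightarrow> bool) \<Rightarrow> int \<Rightarrow> nat" where
  "count133 P K = card {(x, y, z). P x y z \<and> x^2 + 3*y^2 + 3*z^2 = K}"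

abbreviation N133 :: "int \<Rightarrow> nat" where
  "N133 K \<equiv> count133 (\<lambda>_ _ _. True) K"

abbreviation M133 :: "int \<Rightarrow> nat" where
  "M133 K \<equiv> count133 (\<lambda>x y _. odd (x + y)) K"

lemma abs_le_power2_int: "\<bar>x :: int\<bar> \<le> x^2"
  by (cases "x = 0")
    (auto simp: power2_eq_square abs_mult[symmetric] intro: self_le_power[of "\<bar>x\<bar>" 2, simplified])

lemma finite_sols133: "finite {(x, y, z). P x y z \<and> x^2 + 3*y^2 + 3*z^2 = (K::int)}"
proof (rule finite_subset)
  have "(x, y, z) \<in> {-K..K} \<times> {-K..K} \<times> {-K..K}" if "x^2 + 3*y^2 + 3*z^2 = K" for x y z :: int
  proof -
    have "\<bar>x\<bar> \<le> K" "\<bar>y\<bar> \<le> K" "\<bar>z\<bar> \<le> K"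
      using that abs_le_power2_int[of x] abs_le_power2_int[of y] abs_le_power2_int[of z]
        zero_le_power2[of x] zero_le_power2[of y] zero_le_power2[of z] by linarith+
    then show ?thesis by (simp add: abs_le_iff)
  qed
  then show "{(x, y, z). P x y z \<and> x^2 + 3*y^2 + 3*z^2 = K} \<subseteq> {-K..K} \<times> {-K..K} \<times> {-K..K}"
    by blast
qed simp

lemma count133_split:
  "count133 P K = count133 (\<lambda>x y z. P x y z \<and> R x y z) K + count133 (\<lambda>x y z. P x y z \<and> \<not> R x y z) K"
  unfolding count133_def
  by (subst card_Un_disjoint[OF finite_sols133 finite_sols133, symmetric])
    (auto intro!: arg_cong[where f = card])

lemma count133_cong:
  "(\<And>x y z. x^2 + 3*y^2 + 3*z^2 = K \<Longrightarrow> P x y z \<longleftrightarrow> Q x y z) \<Longrightarrow> count133 P K = count133 Q K"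
  unfolding count133_def by (rule arg_cong[where f = card]) auto

lemma count133_swap_yz: "count133 P K = count133 (\<lambda>x y z. P x z y) K"
  unfolding count133_def
  by (rule bij_betw_same_card[OF bij_betw_byWitness[where f = "\<lambda>(x, y, z). (x, z, y)"
        and f' = "\<lambda>(x, y, z). (x, z, y)"]]) auto

lemma count133_uminus_y: "count133 P K = count133 (\<lambda>x y z. P x (- y) z) K"
  unfolding count133_def
  by (rule bij_betw_same_card[OF bij_betw_byWitness[where f = "\<lambda>(x, y, z). (x, -y, z)"
        and f' = "\<lambda>(x, y, z). (x, -y, z)"]]) auto

lemma count133_scale:
  "count133 (\<lambda>x y z. even x \<and> even y \<and> even z \<and> P (x div 2) (y div 2) (z div 2)) (4*K) = count133 P K"
  unfolding count133_def
  by (rule bij_betw_same_card[OF bij_betw_byWitness[where f = "\<lambda>(x, y, z). (x div 2, y div 2, z div 2)"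
        and f' = "\<lambda>(x, y, z). (2*x, 2*y, 2*z)"]])
    (auto simp: power_mult_distrib elim!: evenE)

lemma power2_mod4_int: "(x::int)^2 mod 4 = (if odd x then 1 else 0)"
proof (cases "odd x")
  case True
  then obtain k where "x = 2*k + 1" by (auto elim: oddE)
  then have "x^2 = 4*(k^2 + k) + 1" by (simp add: power2_eq_square algebra_simps)
  with True show ?thesis by (simp only: mod_mult_self4) simp
next
  case False
  then obtain k where "x = 2*k" by (auto elim: evenE)
  then show ?thesis by (simp add: power_mult_distrib)
qed

lemma odd_power2_mod8_int:
  assumes "odd (x::int)" shows "x^2 mod 8 = 1"
proof -
  obtain k where "x = 2*k + 1" using assms by (auto elim: oddE)
  then have "x^2 = 4*(k*(k + 1)) + 1" by (simp add: power2_eq_square algebra_simps)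
  moreover have "even (k*(k + 1))" by simp
  then obtain j where "k*(k + 1) = 2*j" by (rule evenE)
  ultimately have "x^2 = 8*j + 1" by simp
  then show ?thesis by (simp only: mod_mult_self4) simp
qed

lemma mod_sum133: "((a::int) + 3*b + 3*c) mod n = (a mod n + 3 * (b mod n) + 3 * (c mod n)) mod n"
  by (intro mod_add_cong mod_mult_cong) simp_all

lemma sols133_mod4:
  fixes x y z :: int
  assumes "x^2 + 3*y^2 + 3*z^2 = K"
  shows "K mod 4 = ((if odd x then 1 else 0) + 3 * (if odd y then 1 else 0) + 3 * (if odd z then 1 else 0)) mod 4"
proof -
  have "K mod 4 = (x^2 mod 4 + 3 * (y^2 mod 4) + 3 * (z^2 mod 4)) mod 4"
    unfolding assms[symmetric] by (rule mod_sum133)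
  then show ?thesis by (simp only: power2_mod4_int)
qed

lemma sols133_odd_mod8:
  fixes x y z :: int
  assumes "x^2 + 3*y^2 + 3*z^2 = K" and "odd x" "odd y" "odd z"
  shows "K mod 8 = 7"
proof -
  have "K mod 8 = (x^2 mod 8 + 3 * (y^2 mod 8) + 3 * (z^2 mod 8)) mod 8"
    unfolding assms(1)[symmetric] by (rule mod_sum133)
  also have "\<dots> = 7"
    by (simp only: odd_power2_mod8_int[OF assms(2)] odd_power2_mod8_int[OF assms(3)]
        odd_power2_mod8_int[OF assms(4)]) simp
  finally show ?thesis .
qed

lemma eisenstein_reflection:
  fixes x y :: int
  assumes "even (x + y)"
  shows "((x + 3*y) div 2)^2 + 3 * ((x - y) div 2)^2 = x^2 + 3*y^2"
    and "((x + 3*y) div 2 + 3 * ((x - y) div 2)) div 2 = x"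
    and "((x + 3*y) div 2 - (x - y) div 2) div 2 = y"
proof -
  obtain j where x: "x = y + 2*j"
    using assms by (metis add_diff_cancel_left' diff_add_cancel even_add evenE even_diff)
  show "((x + 3*y) div 2)^2 + 3 * ((x - y) div 2)^2 = x^2 + 3*y^2"
    "((x + 3*y) div 2 + 3 * ((x - y) div 2)) div 2 = x"
    "((x + 3*y) div 2 - (x - y) div 2) div 2 = y"
    unfolding x by (simp_all add: power2_eq_square algebra_simps)
qed

lemma count133_eisenstein_reflection:
  "count133 (\<lambda>x y z. odd x \<and> odd y \<and> P z \<and> 4 dvd (x - y)) K
     = count133 (\<lambda>x y z. even x \<and> even y \<and> odd ((x + y) div 2) \<and> P z) K"
proof -
  define \<rho> where "\<rho> = (\<lambda>(x::int, y::int, z::int). ((x + 3*y) div 2, (x - y) div 2, z))"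
  define A where "A = {(x, y, z). (odd x \<and> odd y \<and> P z \<and> 4 dvd (x - y)) \<and> x^2 + 3*y^2 + 3*z^2 = K}"
  define B where "B = {(x, y, z). (even x \<and> even y \<and> odd ((x + y) div 2) \<and> P z) \<and> x^2 + 3*y^2 + 3*z^2 = K}"
  have \<rho>\<rho>: "\<rho> (\<rho> (x, y, z)) = (x, y, z)" if "even (x + y)" for x y z
    using eisenstein_reflection(2,3)[OF that] by (simp add: \<rho>_def)
  have parity_AB: "even ((x + 3*y) div 2) \<and> even ((x - y) div 2) \<and> odd (((x + 3*y) div 2 + (x - y) div 2) div 2)"
    if "odd x" "odd y" "4 dvd (x - y)" for x y :: int
    using that by presburger
  have parity_BA: "odd ((x + 3*y) div 2) \<and> odd ((x - y) div 2) \<and> 4 dvd ((x + 3*y) div 2 - (x - y) div 2)"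
    if "even x" "even y" "odd ((x + y) div 2)" for x y :: int
    using that by presburger
  have A_B: "\<rho> t \<in> B" if "t \<in> A" for t
  proof -
    obtain x y z where t: "t = (x, y, z)" by (rule prod_cases3)
    have xyz: "odd x" "odd y" "P z" "4 dvd (x - y)" and K: "x^2 + 3*y^2 + 3*z^2 = K"
      using that unfolding t A_def mem_Collect_eq prod.case by blast+
    have "((x + 3*y) div 2)^2 + 3 * ((x - y) div 2)^2 + 3*z^2 = K"
      using eisenstein_reflection(1)[of x y] xyz K by simp
    then show ?thesis using parity_AB[OF xyz(1,2,4)] xyz(3)
      unfolding t \<rho>_def B_def by (simp only: mem_Collect_eq prod.case) blast
  qed
  have B_A: "\<rho> t \<in> A" if "t \<in> B" for t
  proof -
    obtain x y z where t: "t = (x, y, z)" by (rule prod_cases3)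
    have xyz: "even x" "even y" "odd ((x + y) div 2)" "P z" and K: "x^2 + 3*y^2 + 3*z^2 = K"
      using that unfolding t B_def mem_Collect_eq prod.case by blast+
    have "((x + 3*y) div 2)^2 + 3 * ((x - y) div 2)^2 + 3*z^2 = K"
      using eisenstein_reflection(1)[of x y] xyz K by simp
    then show ?thesis using parity_BA[OF xyz(1-3)] xyz(4)
      unfolding t \<rho>_def A_def by (simp only: mem_Collect_eq prod.case) blast
  qed
  have "bij_betw \<rho> A B"
  proof (rule bij_betw_byWitness[where f' = \<rho>])
    show "\<forall>t\<in>A. \<rho> (\<rho> t) = t" "\<forall>t\<in>B. \<rho> (\<rho> t) = t"
      unfolding A_def B_def using \<rho>\<rho> by auto
  qed (use A_B B_A in blast)+
  then show ?thesis unfolding count133_def A_def B_def by (rule bij_betw_same_card)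
qed

lemma count133_odd_odd:
  "count133 (\<lambda>x y z. odd x \<and> odd y \<and> P z) K
     = 2 * count133 (\<lambda>x y z. even x \<and> even y \<and> odd ((x + y) div 2) \<and> P z) K"
proof -
  \<comment> \<open>Split by x \<equiv> y or x \<equiv> -y (mod 4); negating y exchanges the two parts.\<close>
  have odd_sum_diff: "4 dvd (x + y) \<longleftrightarrow> \<not> 4 dvd (x - y)" if "odd x" "odd y" for x y :: int
    using that by presburger
  have "count133 (\<lambda>x y z. odd x \<and> odd y \<and> P z) K
      = count133 (\<lambda>x y z. (odd x \<and> odd y \<and> P z) \<and> 4 dvd (x - y)) K
      + count133 (\<lambda>x y z. (odd x \<and> odd y \<and> P z) \<and> \<not> 4 dvd (x - y)) K"
    by (rule count133_split)
  also have "count133 (\<lambda>x y z. (odd x \<and> odd y \<and> P z) \<and> \<not> 4 dvd (x - y)) K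
      = count133 (\<lambda>x y z. (odd x \<and> odd (- y) \<and> P z) \<and> \<not> 4 dvd (x - - y)) K"
    by (rule count133_uminus_y)
  also have "\<dots> = count133 (\<lambda>x y z. (odd x \<and> odd y \<and> P z) \<and> 4 dvd (x - y)) K"
    by (rule count133_cong) (auto simp: odd_sum_diff)
  finally show ?thesis
    using count133_eisenstein_reflection[of P K] by (simp add: conj_assoc)
qed

lemma sols133_times4_parity:
  fixes x y z :: int
  assumes "x^2 + 3*y^2 + 3*z^2 = 4*K"
  shows "(even x \<and> even y \<and> even z) \<or> (odd x \<and> odd y \<and> even z) \<or> (odd x \<and> even y \<and> odd z)"
  using sols133_mod4[OF assms] by (cases "odd x"; cases "odd y"; cases "odd z") simp_all

lemma count133_odd_odd_even_times4:
  "count133 (\<lambda>x y z. odd x \<and> odd y \<and> even z) (4*K) = 2 * M133 K"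
proof -
  have "count133 (\<lambda>x y z. even x \<and> even y \<and> odd ((x + y) div 2) \<and> even z) (4*K)
      = count133 (\<lambda>x y z. even x \<and> even y \<and> even z \<and> odd (x div 2 + y div 2)) (4*K)"
    by (rule count133_cong) (auto simp: div_plus_div_distrib_dvd_left)
  then show ?thesis
    using count133_odd_odd[of even] count133_scale[of "\<lambda>x y _. odd (x + y)"] by simp
qed

lemma count133_odd_odd_sum_times4:
  "count133 (\<lambda>x y z. odd x \<and> odd (y + z)) (4*K) = 4 * M133 K"
proof -
  have "count133 (\<lambda>x y z. odd x \<and> odd (y + z)) (4*K)
      = count133 (\<lambda>x y z. (odd x \<and> odd (y + z)) \<and> odd y) (4*K)
      + count133 (\<lambda>x y z. (odd x \<and> odd (y + z)) \<and> \<not> odd y) (4*K)"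
    by (rule count133_split)
  also have "count133 (\<lambda>x y z. (odd x \<and> odd (y + z)) \<and> \<not> odd y) (4*K)
      = count133 (\<lambda>x y z. (odd x \<and> odd (z + y)) \<and> \<not> odd z) (4*K)"
    by (rule count133_swap_yz)
  also have "count133 (\<lambda>x y z. (odd x \<and> odd (y + z)) \<and> odd y) (4*K)
      = count133 (\<lambda>x y z. odd x \<and> odd y \<and> even z) (4*K)"
    by (rule count133_cong) auto
  also have "count133 (\<lambda>x y z. (odd x \<and> odd (z + y)) \<and> \<not> odd z) (4*K)
      = count133 (\<lambda>x y z. odd x \<and> odd y \<and> even z) (4*K)"
    by (rule count133_cong) auto
  finally show ?thesis by (simp add: count133_odd_odd_even_times4)
qed

lemma M133_times4: "M133 (4*K) = 2 * M133 K"
proof -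
  have "M133 (4*K) = count133 (\<lambda>x y z. odd x \<and> even y \<and> odd z) (4*K)"
    by (rule count133_cong) (drule sols133_times4_parity; auto)
  also have "\<dots> = count133 (\<lambda>x y z. odd x \<and> odd y \<and> even z) (4*K)"
    by (subst count133_swap_yz) (simp add: conj_commute)
  finally show ?thesis by (simp add: count133_odd_odd_even_times4)
qed

lemma N133_times4: "N133 (4*K) = N133 K + 4 * M133 K"
proof -
  have "N133 (4*K) = count133 (\<lambda>x y z. even x \<and> even y \<and> even z) (4*K)
      + count133 (\<lambda>x y z. \<not> (even x \<and> even y \<and> even z)) (4*K)"
    using count133_split[of "\<lambda>_ _ _. True" _ "\<lambda>x y z. even x \<and> even y \<and> even z"] by simp
  also have "count133 (\<lambda>x y z. \<not> (even x \<and> even y \<and> even z)) (4*K)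
      = count133 (\<lambda>x y z. odd x \<and> odd (y + z)) (4*K)"
    by (rule count133_cong) (drule sols133_times4_parity; auto)
  finally show ?thesis
    using count133_scale[of "\<lambda>_ _ _. True"] count133_odd_odd_sum_times4[of K] by simp
qed

lemma M133_eq_N133:
  assumes "K mod 4 = 1 \<or> K mod 4 = 2"
  shows "M133 K = N133 K"
proof (rule count133_cong)
  fix x y z :: int
  assume "x^2 + 3*y^2 + 3*z^2 = K"
  from sols133_mod4[OF this] assms show "odd (x + y) \<longleftrightarrow> True"
    by (cases "odd x"; cases "odd y"; cases "odd z") auto
qed

lemma count133_even_even_odd:
  assumes "K mod 4 = 3"
  shows "count133 (\<lambda>x y z. even x \<and> even y \<and> odd z) K = M133 K"
proof -
  have "count133 (\<lambda>x y z. even x \<and> even y \<and> odd z) K = count133 (\<lambda>x y z. even x \<and> even z \<and> odd y) K"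
    by (rule count133_swap_yz)
  also have "\<dots> = M133 K"
  proof (rule count133_cong)
    fix x y z :: int
    assume "x^2 + 3*y^2 + 3*z^2 = K"
    from sols133_mod4[OF this] assms show "even x \<and> even z \<and> odd y \<longleftrightarrow> odd (x + y)"
      by (cases "odd x"; cases "odd y"; cases "odd z") auto
  qed
  finally show ?thesis .
qed

lemma N133_mod4_eq_3:
  assumes "K mod 4 = 3"
  shows "N133 K = 2 * M133 K + count133 (\<lambda>x y z. odd x \<and> odd y \<and> odd z) K"
proof -
  have "N133 K = M133 K + count133 (\<lambda>x y z. \<not> odd (x + y)) K"
    using count133_split[of "\<lambda>_ _ _. True" K "\<lambda>x y _. odd (x + y)"] by simp
  also have "count133 (\<lambda>x y z. \<not> odd (x + y)) K
      = count133 (\<lambda>x y z. \<not> odd (x + y) \<and> odd x) K + count133 (\<lambda>x y z. \<not> odd (x + y) \<and> \<not> odd x) K"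
    by (rule count133_split)
  also have "count133 (\<lambda>x y z. \<not> odd (x + y) \<and> odd x) K = count133 (\<lambda>x y z. odd x \<and> odd y \<and> odd z) K"
  proof (rule count133_cong)
    fix x y z :: int
    assume "x^2 + 3*y^2 + 3*z^2 = K"
    from sols133_mod4[OF this] assms show "\<not> odd (x + y) \<and> odd x \<longleftrightarrow> odd x \<and> odd y \<and> odd z"
      by (cases "odd x"; cases "odd y"; cases "odd z") auto
  qed
  also have "count133 (\<lambda>x y z. \<not> odd (x + y) \<and> \<not> odd x) K = count133 (\<lambda>x y z. even x \<and> even y \<and> odd z) K"
  proof (rule count133_cong)
    fix x y z :: int
    assume "x^2 + 3*y^2 + 3*z^2 = K"
    from sols133_mod4[OF this] assms show "\<not> odd (x + y) \<and> \<not> odd x \<longleftrightarrow> even x \<and> even y \<and> odd z"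
      by (cases "odd x"; cases "odd y"; cases "odd z") auto
  qed
  finally show ?thesis using count133_even_even_odd[OF assms] by simp
qed

lemma N133_mod8_eq_3:
  assumes "K mod 8 = 3"
  shows "N133 K = 2 * M133 K"
proof -
  have "{(x, y, z). (odd x \<and> odd y \<and> odd z) \<and> x^2 + 3*y^2 + 3*z^2 = K} = {}"
    using assms sols133_odd_mod8 by force
  then have "count133 (\<lambda>x y z. odd x \<and> odd y \<and> odd z) K = 0"
    unfolding count133_def by (simp only: card.empty)
  moreover have "K mod 4 = 3" using assms by presburger
  ultimately show ?thesis using N133_mod4_eq_3 by simp
qed

lemma count133_odd_odd_odd:
  assumes "K mod 8 = 7"
  shows "count133 (\<lambda>x y z. odd x \<and> odd y \<and> odd z) K = 2 * M133 K"
proof -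
  have "odd ((x + y) div 2)"
    if sol: "x^2 + 3*y^2 + 3*z^2 = K" and parity: "even x" "even y" "odd z" for x y z :: int
  proof -
    obtain a b where ab: "x = 2*a" "y = 2*b" using parity(1,2) by (auto elim!: evenE)
    have "K = 4*(a^2 + 3*b^2) + 3*z^2" using sol unfolding ab by (simp add: power_mult_distrib)
    moreover have "odd w" if "K = 4*w + 3*s" "s mod 8 = 1" for w s :: int
      using that assms by presburger
    ultimately have "odd (a^2 + 3*b^2)" using odd_power2_mod8_int[OF parity(3)] by blast
    then show ?thesis unfolding ab by simp
  qed
  then have "count133 (\<lambda>x y z. even x \<and> even y \<and> odd ((x + y) div 2) \<and> odd z) K
      = count133 (\<lambda>x y z. even x \<and> even y \<and> odd z) K"
    by (intro count133_cong) blast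
  moreover have "K mod 4 = 3" using assms by presburger
  ultimately show ?thesis using count133_odd_odd[of odd K] count133_even_even_odd by simp
qed

lemma N133_mod8_eq_7:
  assumes "K mod 8 = 7"
  shows "N133 K = 4 * M133 K"
proof -
  have "K mod 4 = 3" using assms by presburger
  then show ?thesis using N133_mod4_eq_3 count133_odd_odd_odd[OF assms] by simp
qed

lemma card_sols233_eq_count133:
  "card {(x, y, z). Q x y z \<and> 2*x^2 + 3*y^2 + 3*z^2 = 2*K} = count133 (\<lambda>x u v. Q x (u + v) (u - v)) K"
proof -
  define A where "A = {(x, u, v). Q x (u + v) (u - v) \<and> x^2 + 3*u^2 + 3*v^2 = K}"
  define B where "B = {(x, y, z). Q x y z \<and> 2*x^2 + 3*y^2 + 3*z^2 = 2*K}"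
  define f where "f = (\<lambda>(x::int, u::int, v::int). (x, u + v, u - v))"
  define g where "g = (\<lambda>(x::int, y::int, z::int). (x, (y + z) div 2, (y - z) div 2))"
  have form: "2*x^2 + 3*(u + v)^2 + 3*(u - v)^2 = 2*(x^2 + 3*u^2 + 3*v^2)" for x u v :: int
    by (simp add: power2_eq_square algebra_simps)
  have B_even: "even (y + z)" if "(x, y, z) \<in> B" for x y z
  proof -
    from that have "3*(y^2 + z^2) = 2*(K - x^2)" unfolding B_def by simp
    then have "even (3*(y^2 + z^2))" by simp
    then show ?thesis by simp
  qed
  have gf: "g (f t) = t" for t
    unfolding f_def g_def by (cases t) auto
  have fg: "f (g t) = t" if "t \<in> B" for t
  proof -
    obtain x y z where t: "t = (x, y, z)" by (rule prod_cases3)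
    have "even (y + z)" using B_even that unfolding t by blast
    then have "(y + z) div 2 + (y - z) div 2 = y" "(y + z) div 2 - (y - z) div 2 = z" by presburger+
    then show ?thesis unfolding t f_def g_def by simp
  qed
  have "bij_betw f A B"
  proof (rule bij_betw_byWitness[where f' = g])
    show "\<forall>t\<in>A. g (f t) = t" "\<forall>t\<in>B. f (g t) = t" using gf fg by blast+
    show "f ` A \<subseteq> B" unfolding A_def B_def f_def using form by auto
    show "g ` B \<subseteq> A"
    proof
      fix s assume "s \<in> g ` B"
      then obtain t where t: "t \<in> B" "s = g t" by blast
      obtain x u v where s: "s = (x, u, v)" by (rule prod_cases3)
      have "f s = t" using fg t by simp
      then have "(x, u + v, u - v) \<in> B" using t(1) unfolding s f_def by simp
      then show "s \<in> A" unfolding s A_def B_def using form[of x u v] by simp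
    qed
  qed
  then show ?thesis unfolding count133_def A_def[symmetric] B_def[symmetric]
    by (rule bij_betw_same_card[symmetric])
qed

lemma triangular_square: "8 * (x * (x + 1) div 2) + 1 = (2*x + 1)^2" for x :: int
proof -
  have "even (x * (x + 1))" by simp
  then obtain k where k: "x * (x + 1) = 2 * k" by (rule evenE)
  have "(2*x + 1)^2 = 4 * (x * (x + 1)) + 1" by (simp add: power2_eq_square algebra_simps)
  then show ?thesis unfolding k by simp
qed

lemma trep_eq_card_odd:
  "trep a b c n = card {(x, y, z). odd x \<and> odd y \<and> odd z
     \<and> int (8*n + a + b + c) = int a * x^2 + int b * y^2 + int c * z^2}"
proof -
  define A where "A = {(x::int, y::int, z::int).
      int n = int a * (x * (x + 1) div 2) + int b * (y * (y + 1) div 2) + int c * (z * (z + 1) div 2)}"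
  define B where "B = {(x, y, z). odd x \<and> odd y \<and> odd z
     \<and> int (8*n + a + b + c) = int a * x^2 + int b * y^2 + int c * z^2}"
  define f where "f = (\<lambda>(x::int, y::int, z::int). (2*x + 1, 2*y + 1, 2*z + 1))"
  define g where "g = (\<lambda>(x::int, y::int, z::int). (x div 2, y div 2, z div 2))"
  have sum: "int a * (2*x + 1)^2 + int b * (2*y + 1)^2 + int c * (2*z + 1)^2
      = 8 * (int a * (x * (x + 1) div 2) + int b * (y * (y + 1) div 2) + int c * (z * (z + 1) div 2))
        + int a + int b + int c" for x y z :: int
    unfolding triangular_square[symmetric] by (simp add: algebra_simps)
  have "bij_betw f A B"
  proof (rule bij_betw_byWitness[where f' = g])
    show "\<forall>t\<in>A. g (f t) = t" unfolding f_def g_def by auto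
    show "\<forall>t\<in>B. f (g t) = t" unfolding B_def f_def g_def by auto
    show "f ` A \<subseteq> B" unfolding A_def B_def f_def using sum by auto
    show "g ` B \<subseteq> A"
    proof
      fix s assume "s \<in> g ` B"
      then obtain t where "t \<in> B" "s = g t" by blast
      moreover obtain x y z where "t = (x, y, z)" by (rule prod_cases3)
      ultimately have xyz: "(x, y, z) \<in> B" "s = g (x, y, z)" by simp_all
      obtain x' y' z' where "x = 2*x' + 1" "y = 2*y' + 1" "z = 2*z' + 1"
        using xyz(1) unfolding B_def by (auto elim!: oddE)
      then show "s \<in> A" using xyz sum[of x' y' z'] unfolding A_def B_def g_def by auto
    qed
  qed
  then show ?thesis unfolding trep_def A_def[symmetric] B_def[symmetric] by (rule bij_betw_same_card)
qed

lemma Nrep133_eq_N133: "Nrep 1 3 3 k = N133 (int k)"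
  unfolding Nrep_def count133_def by (rule arg_cong[where f = card]) auto

lemma Nrep233_double: "Nrep 2 3 3 (2*m) = N133 (int m)"
proof -
  have "Nrep 2 3 3 (2*m) = card {(x, y, z). True \<and> 2*x^2 + 3*y^2 + 3*z^2 = 2 * int m}"
    unfolding Nrep_def by (rule arg_cong[where f = card]) auto
  also have "\<dots> = N133 (int m)"
    by (rule card_sols233_eq_count133)
  finally show ?thesis .
qed

lemma trep133_eq_count133: "trep 1 3 3 m = count133 (\<lambda>x y z. odd x \<and> odd y \<and> odd z) (8 * int m + 7)"
  unfolding trep_eq_card_odd count133_def by (rule arg_cong[where f = card]) auto

lemma trep233_eq: "trep 2 3 3 n = 4 * M133 (int n + 1)"
proof -
  have "trep 2 3 3 n = card {(x, y, z). (odd x \<and> odd y \<and> odd z) \<and> 2*x^2 + 3*y^2 + 3*z^2 = 2 * (4 * (int n + 1))}"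
    unfolding trep_eq_card_odd by (rule arg_cong[where f = card]) auto
  also have "\<dots> = count133 (\<lambda>x u v. odd x \<and> odd (u + v) \<and> odd (u - v)) (4 * (int n + 1))"
    by (rule card_sols233_eq_count133)
  also have "\<dots> = count133 (\<lambda>x y z. odd x \<and> odd (y + z)) (4 * (int n + 1))"
    by (rule count133_cong) auto
  also have "\<dots> = 4 * M133 (int n + 1)"
    by (rule count133_odd_odd_sum_times4)
  finally show ?thesis .
qed

lemma Nrep133_succ_eq: "Nrep 1 3 3 (n + 1) = N133 (int n + 1)"
  unfolding Nrep133_eq_N133 of_nat_add of_nat_1 ..

lemma trep233_quarter:
  assumes "int n + 1 = 4 * J"
  shows "trep 2 3 3 n = 8 * M133 J" and "Nrep 1 3 3 (n + 1) = N133 J + 4 * M133 J"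
  unfolding trep233_eq Nrep133_succ_eq assms M133_times4 N133_times4 by simp_all

lemma trep233_8m6: "trep 2 3 3 (8*m + 6) = 2 * trep 1 3 3 m"
proof -
  have "int (8*m + 6) + 1 = 8 * int m + 7" "(8 * int m + 7) mod 8 = 7" by simp presburger
  then show ?thesis unfolding trep233_eq trep133_eq_count133 by (simp only: count133_odd_odd_odd)
qed

lemma trep233_32m27: "trep 2 3 3 (32*m + 27) = 4 * trep 1 3 3 m"
proof -
  have q: "int (32*m + 27) + 1 = 4 * (8 * int m + 7)" by simp
  have "(8 * int m + 7) mod 8 = 7" by presburger
  then show ?thesis
    unfolding trep233_quarter(1)[OF q] trep133_eq_count133 by (simp only: count133_odd_odd_odd)
qed

lemma trep233_mod4_eq_0_1:
  assumes "n mod 4 = 0 \<or> n mod 4 = 1"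
  shows "trep 2 3 3 n = 4 * Nrep 1 3 3 (n + 1)"
proof -
  have "(int n + 1) mod 4 = 1 \<or> (int n + 1) mod 4 = 2" using assms by presburger
  then show ?thesis unfolding trep233_eq Nrep133_succ_eq by (simp only: M133_eq_N133)
qed

lemma trep233_mod8_eq_2:
  assumes "n mod 8 = 2"
  shows "trep 2 3 3 n = 2 * Nrep 1 3 3 (n + 1)"
proof -
  have "(int n + 1) mod 8 = 3" using assms by presburger
  then show ?thesis unfolding trep233_eq Nrep133_succ_eq by (simp only: N133_mod8_eq_3)
qed

lemma trep233_mod8_eq_6:
  assumes "n mod 8 = 6"
  shows "trep 2 3 3 n = Nrep 1 3 3 (n + 1)"
proof -
  have "(int n + 1) mod 8 = 7" using assms by presburger
  then show ?thesis unfolding trep233_eq Nrep133_succ_eq by (simp only: N133_mod8_eq_7)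
qed

lemma trep233_mod32_eq_27:
  assumes "n mod 32 = 27"
  shows "trep 2 3 3 n = Nrep 1 3 3 (n + 1)"
proof -
  have q: "int n + 1 = 4 * ((int n + 1) div 4)" and r: "((int n + 1) div 4) mod 8 = 7"
    using assms by presburger+
  show ?thesis unfolding trep233_quarter[OF q] N133_mod8_eq_7[OF r] by simp
qed

lemma trep233_mod16_eq_3_7:
  assumes "n mod 16 = 3 \<or> n mod 16 = 7"
  shows "5 * trep 2 3 3 n = 8 * Nrep 1 3 3 (n + 1)"
proof -
  have q: "int n + 1 = 4 * ((int n + 1) div 4)"
    and r: "((int n + 1) div 4) mod 4 = 1 \<or> ((int n + 1) div 4) mod 4 = 2"
    using assms by presburger+
  show ?thesis unfolding trep233_quarter[OF q] M133_eq_N133[OF r] by simp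
qed

lemma trep233_mod32_eq_11:
  assumes "n mod 32 = 11"
  shows "3 * trep 2 3 3 n = 4 * Nrep 1 3 3 (n + 1)"
proof -
  have q: "int n + 1 = 4 * ((int n + 1) div 4)" and r: "((int n + 1) div 4) mod 8 = 3"
    using assms by presburger+
  show ?thesis unfolding trep233_quarter[OF q] N133_mod8_eq_3[OF r] by simp
qed

theorem theorem2p1:
  shows "(\<forall>m::nat. Nrep 2 3 3 (2 * m) = Nrep 1 3 3 m
            \<and> trep 2 3 3 (8 * m + 6) = 2 * trep 1 3 3 m
            \<and> trep 2 3 3 (32 * m + 27) = 4 * trep 1 3 3 m)
       \<and> (\<forall>n::nat. n > 0 \<longrightarrow> n mod 16 \<noteq> 15 \<longrightarrow>
            ((n mod 4 = 0 \<or> n mod 4 = 1) \<longrightarrow>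
                real (trep 2 3 3 n) = 4 * real (Nrep 1 3 3 (n + 1)))
          \<and> (n mod 8 = 2 \<longrightarrow>
                real (trep 2 3 3 n) = 2 * real (Nrep 1 3 3 (n + 1)))
          \<and> ((n mod 8 = 6 \<or> n mod 32 = 27) \<longrightarrow>
                real (trep 2 3 3 n) = real (Nrep 1 3 3 (n + 1)))
          \<and> ((n mod 16 = 3 \<or> n mod 16 = 7) \<longrightarrow>
                real (trep 2 3 3 n) = 8 / 5 * real (Nrep 1 3 3 (n + 1)))
          \<and> (n mod 32 = 11 \<longrightarrow>
                real (trep 2 3 3 n) = 4 / 3 * real (Nrep 1 3 3 (n + 1))))"
proof (intro conjI allI impI)
  fix m :: nat
  show "Nrep 2 3 3 (2 * m) = Nrep 1 3 3 m" unfolding Nrep233_double Nrep133_eq_N133 ..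
  show "trep 2 3 3 (8 * m + 6) = 2 * trep 1 3 3 m" by (rule trep233_8m6)
  show "trep 2 3 3 (32 * m + 27) = 4 * trep 1 3 3 m" by (rule trep233_32m27)
next
  fix n :: nat
  show "n mod 4 = 0 \<or> n mod 4 = 1 \<Longrightarrow> real (trep 2 3 3 n) = 4 * real (Nrep 1 3 3 (n + 1))"
    by (simp add: trep233_mod4_eq_0_1)
  show "n mod 8 = 2 \<Longrightarrow> real (trep 2 3 3 n) = 2 * real (Nrep 1 3 3 (n + 1))"
    by (simp add: trep233_mod8_eq_2)
  show "n mod 8 = 6 \<or> n mod 32 = 27 \<Longrightarrow> real (trep 2 3 3 n) = real (Nrep 1 3 3 (n + 1))"
    using trep233_mod8_eq_6 trep233_mod32_eq_27 by auto
  show "n mod 16 = 3 \<or> n mod 16 = 7 \<Longrightarrow> real (trep 2 3 3 n) = 8 / 5 * real (Nrep 1 3 3 (n + 1))"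
    by (drule trep233_mod16_eq_3_7) (simp add: field_simps flip: of_nat_mult)
  show "n mod 32 = 11 \<Longrightarrow> real (trep 2 3 3 n) = 4 / 3 * real (Nrep 1 3 3 (n + 1))"
    by (drule trep233_mod32_eq_11) (simp add: field_simps flip: of_nat_mult)
qed

end
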